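(* Let $T$ and $S$ be binary search trees on the same set of $n$ keys, with nodes identified via their keys. Define $w_T(v)=1/4^{d_T(v)}$, $w(v)=w_T(v)$, let $s_T(v)$ (resp. $s(v)$) be the sum of the weights in the subtree of $v$ in $T$ (resp. $S$), including $v$, let $r_T(v)=\log_2 s_T(v)$ and $r(v)=\log_2 s(v)$, and let $P(T)=\sum_{v}r_T(v)$, $P(S)=\sum_v r(v)$ and $\Phi=P(S)-P(T)$. Then $-n<\Phi$ for every pair of such trees $S$ and $T$.
   Context: $d_T(v)$ is the depth of $v$ in $T$ (distance to the root; the root has depth $0$). Logarithms are base $2$. *)

theory Defs
  imports Complex_Main "HOL-Library.Tree"
begin

fun depth :: "'a::linorder tree \<Rightarrow> 'a \<Rightarrow> nat" where
  "depth Leaf x = 0"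
| "depth (Node l a r) x =
     (if x = a then 0 else if x < a then Suc (depth l x) else Suc (depth r x))"

fun subtree_at :: "'a::linorder tree \<Rightarrow> 'a \<Rightarrow> 'a tree" where
  "subtree_at Leaf x = Leaf"
| "subtree_at (Node l a r) x =
     (if x = a then Node l a r else if x < a then subtree_at l x else subtree_at r x)"

definition wt :: "'a::linorder tree \<Rightarrow> 'a \<Rightarrow> real" where
  "wt T v = 1 / 4 ^ depth T v"

definition subtree_weight :: "('a \<Rightarrow> real) \<Rightarrow> 'a::linorder tree \<Rightarrow> 'a \<Rightarrow> real" where
  "subtree_weight w U v = (\<Sum>u\<in>set_tree (subtree_at U v). w u)"

definition pot :: "('a \<Rightarrow> real) \<Rightarrow> 'a::linorder tree \<Rightarrow> real" where
  "pot w U = (\<Sum>v\<in>set_tree U. log 2 (subtree_weight w U v))"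

end

theory Submission
  imports Defs
begin

text \<open>In \<open>T\<close> the weights below a key \<open>v\<close> decay by a factor \<open>4\<close> per level while a binary
tree at most doubles its width, so the subtree weight \<open>s\<^sub>T(v)\<close> is less than \<open>2 w(v)\<close>.
In \<open>S\<close> the subtree of \<open>v\<close> contains \<open>v\<close> itself, so \<open>s(v) \<ge> w(v)\<close>. Hence
\<open>r(v) - r\<^sub>T(v) > -1\<close> for every key, and summing over the \<open>n\<close> keys gives \<open>\<Phi> > -n\<close>.\<close>

lemma depth_Node_left:
  assumes "bst (Node l a r)" "u \<in> set_tree l"
  shows "depth (Node l a r) u = Suc (depth l u)"
  using assms by auto

lemma depth_Node_right:
  assumes "bst (Node l a r)" "u \<in> set_tree r"
  shows "depth (Node l a r) u = Suc (depth r u)"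
  using assms by (auto dest: less_asym)

lemma sum_power_depth_less:
  fixes q :: real
  assumes "bst t" "0 < q" "q < 1/2"
  shows "(\<Sum>u\<in>set_tree t. q ^ depth t u) < 1 / (1 - 2 * q)"
  using assms(1)
proof (induction t)
  case Leaf
  then show ?case using assms(3) by simp
next
  case (Node l a r)
  let ?f = "\<lambda>t. \<Sum>u\<in>set_tree t. q ^ depth t u"
  have keys: "\<forall>u\<in>set_tree l. u < a" "\<forall>u\<in>set_tree r. a < u" "bst l" "bst r"
    using Node.prems by auto
  then have disjoint: "set_tree l \<inter> set_tree r = {}" "a \<notin> set_tree l \<union> set_tree r"
    by (auto dest: less_asym)
  have "?f (Node l a r) = 1 + ((\<Sum>u\<in>set_tree l. q ^ depth (Node l a r) u) +
                               (\<Sum>u\<in>set_tree r. q ^ depth (Node l a r) u))"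
    using disjoint by (simp add: sum.union_disjoint)
  also have "\<dots> = 1 + q * (?f l + ?f r)"
    using depth_Node_left[OF Node.prems] depth_Node_right[OF Node.prems]
    by (simp add: sum_distrib_left distrib_left)
  also have "\<dots> < 1 + q * (2 / (1 - 2 * q))"
    using Node.IH keys assms(2) by (intro add_strict_left_mono mult_strict_left_mono) auto
  also have "\<dots> = 1 / (1 - 2 * q)"
    using assms(3) by (simp add: field_simps)
  finally show ?case .
qed

lemma set_tree_subtree_at_subset: "set_tree (subtree_at T v) \<subseteq> set_tree T"
  by (induction T) auto

lemma bst_subtree_at: "bst T \<Longrightarrow> bst (subtree_at T v)"
  by (induction T) auto

lemma in_set_tree_subtree_at: "bst T \<Longrightarrow> v \<in> set_tree T \<Longrightarrow> v \<in> set_tree (subtree_at T v)"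
  by (induction T) (auto dest: less_asym)

lemma depth_subtree_at:
  "bst T \<Longrightarrow> u \<in> set_tree (subtree_at T v) \<Longrightarrow>
     depth T u = depth T v + depth (subtree_at T v) u"
proof (induction T)
  case Leaf
  then show ?case by simp
next
  case (Node l a r)
  consider "v = a" | "v < a" | "a < v" by fastforce
  then show ?case
  proof cases
    case 1
    then show ?thesis using Node.prems by simp
  next
    case 2
    then have "u \<in> set_tree (subtree_at l v)"
      using Node.prems by (simp add: less_imp_neq)
    then have "u \<in> set_tree l" "u \<in> set_tree (subtree_at l v)"
      using set_tree_subtree_at_subset by auto
    then show ?thesis
      using 2 Node.IH(1) Node.prems(1) depth_Node_left[OF Node.prems(1)] by simp
  next
    case 3
    then have "u \<in> set_tree (subtree_at r v)"
      using Node.prems 3 by (auto split: if_splits)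
    then have "u \<in> set_tree r" "u \<in> set_tree (subtree_at r v)"
      using set_tree_subtree_at_subset by auto
    then show ?thesis
      using 3 Node.IH(2) Node.prems(1) depth_Node_right[OF Node.prems(1)] by auto
  qed
qed

lemma subtree_weight_wt_less:
  assumes "bst T"
  shows "subtree_weight (wt T) T v < 2 * wt T v"
proof -
  let ?U = "subtree_at T v"
  have "subtree_weight (wt T) T v = wt T v * (\<Sum>u\<in>set_tree ?U. (1/4) ^ depth ?U u)"
    unfolding subtree_weight_def wt_def sum_distrib_left
    by (intro sum.cong refl)
       (simp add: depth_subtree_at[OF assms] power_add power_one_over)
  also have "\<dots> < wt T v * (1 / (1 - 2 * (1/4)))"
    using sum_power_depth_less[OF bst_subtree_at[OF assms], of "1/4"]
    by (intro mult_strict_left_mono) (auto simp: wt_def)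
  finally show ?thesis by simp
qed

lemma weight_le_subtree_weight:
  assumes "bst S" "v \<in> set_tree S" "\<And>u. 0 \<le> w u"
  shows "w v \<le> subtree_weight w S v"
  unfolding subtree_weight_def
  using assms in_set_tree_subtree_at by (intro member_le_sum) auto

lemma log_subtree_weight_diff_gt:
  assumes "bst T" "bst S" "v \<in> set_tree T" "v \<in> set_tree S"
  shows "-1 < log 2 (subtree_weight (wt T) S v) - log 2 (subtree_weight (wt T) T v)"
proof -
  have wt_pos: "0 < wt T u" for u by (simp add: wt_def)
  then have T_pos: "0 < subtree_weight (wt T) T v"
    using weight_le_subtree_weight[OF assms(1,3)] less_le_trans less_imp_le by metis
  have "log 2 (subtree_weight (wt T) T v) < log 2 (2 * wt T v)"
    using subtree_weight_wt_less[OF assms(1)] T_pos by (intro log_less) auto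
  also have "\<dots> = 1 + log 2 (wt T v)"
    using wt_pos[of v] by (simp add: log_mult)
  also have "log 2 (wt T v) \<le> log 2 (subtree_weight (wt T) S v)"
    using weight_le_subtree_weight[OF assms(2,4), of "wt T"] wt_pos
    by (simp add: less_imp_le log_mono)
  finally show ?thesis by simp
qed

theorem lemma4p2:
  fixes T S :: "'a::linorder tree"
  assumes "bst T" and "bst S"
    and "set_tree S = set_tree T"
    and "n = card (set_tree T)"
    and "n \<ge> 1"
  shows "- real n < pot (wt T) S - pot (wt T) T"
proof -
  have "set_tree T \<noteq> {}" using assms(4,5) by auto
  then have "(\<Sum>v\<in>set_tree T. -1) < (\<Sum>v\<in>set_tree T.
      log 2 (subtree_weight (wt T) S v) - log 2 (subtree_weight (wt T) T v))"
    using log_subtree_weight_diff_gt[OF assms(1,2)] assms(3)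
    by (intro sum_strict_mono) auto
  then show ?thesis
    using assms(3,4) unfolding pot_def by (simp add: sum_subtractf)
qed

end
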